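(* Let $\mathcal{A}_i\subset\mathbb{R}^{n_i}$, $i\in\mathbb{N}$, be nonempty closed sets and assume that $\mathcal{A}:=\{x\in X: x_i\in\mathcal{A}_i \text{ for all } i\in\mathbb{N}\}$ is nonempty. Then for every $x\in X$ there exists $y^*\in\mathcal{A}$ such that $|x|_{\mathcal{A}}=\sup_{i\in\mathbb{N}}|x_i|_{\mathcal{A}_i}=|x-y^*|_\infty$.
   Context: For each $i\in\mathbb{N}$ fix a positive integer $n_i$ and a norm $|\cdot|$ on $\mathbb{R}^{n_i}$. Let $X:=\{x=(x_i)_{i\in\mathbb{N}}: x_i\in\mathbb{R}^{n_i},\ \sup_i|x_i|<\infty\}$ with norm $|x|_\infty:=\sup_i|x_i|$. For $z\in\mathbb{R}^{n_i}$, $|z|_{\mathcal{A}_i}:=\inf_{y\in\mathcal{A}_i}|z-y|$, and for $x\in X$, $|x|_{\mathcal{A}}:=\inf_{y\in\mathcal{A}}|x-y|_\infty$. *)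

theory Defs
  imports "HOL-Analysis.Analysis"
begin

text \<open>The space R^n is represented as real sequences vanishing from index n on.\<close>
definition Rn :: "nat \<Rightarrow> (nat \<Rightarrow> real) set" where
  "Rn n = {v. \<forall>j\<ge>n. v j = 0}"

definition is_norm_on :: "nat \<Rightarrow> ((nat \<Rightarrow> real) \<Rightarrow> real) \<Rightarrow> bool" where
  "is_norm_on n N \<longleftrightarrow>
     (\<forall>v\<in>Rn n. 0 \<le> N v \<and> (N v = 0 \<longleftrightarrow> (\<forall>j. v j = 0))) \<and>
     (\<forall>v\<in>Rn n. \<forall>c. N (\<lambda>j. c * v j) = \<bar>c\<bar> * N v) \<and>
     (\<forall>v\<in>Rn n. \<forall>w\<in>Rn n. N (\<lambda>j. v j + w j) \<le> N v + N w)"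

definition Xsp :: "(nat \<Rightarrow> nat) \<Rightarrow> (nat \<Rightarrow> (nat \<Rightarrow> real) \<Rightarrow> real) \<Rightarrow> (nat \<Rightarrow> nat \<Rightarrow> real) set" where
  "Xsp n N = {x. (\<forall>i. x i \<in> Rn (n i)) \<and> bdd_above (range (\<lambda>i. N i (x i)))}"

definition norm_inf :: "(nat \<Rightarrow> (nat \<Rightarrow> real) \<Rightarrow> real) \<Rightarrow> (nat \<Rightarrow> nat \<Rightarrow> real) \<Rightarrow> real" where
  "norm_inf N x = (SUP i. N i (x i))"

definition dist_set :: "((nat \<Rightarrow> real) \<Rightarrow> real) \<Rightarrow> (nat \<Rightarrow> real) set \<Rightarrow> (nat \<Rightarrow> real) \<Rightarrow> real" where
  "dist_set Ni S z = Inf ((\<lambda>y. Ni (\<lambda>j. z j - y j)) ` S)"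

definition dist_setX :: "(nat \<Rightarrow> (nat \<Rightarrow> real) \<Rightarrow> real) \<Rightarrow> (nat \<Rightarrow> nat \<Rightarrow> real) set \<Rightarrow> (nat \<Rightarrow> nat \<Rightarrow> real) \<Rightarrow> real" where
  "dist_setX N S x = Inf ((\<lambda>y. norm_inf N (\<lambda>i j. x i j - y i j)) ` S)"

end

theory Submission
  imports Defs
begin

text \<open>
  Each coordinate set \<open>A i\<close> is closed in a finite-dimensional normed space, so every \<open>x i\<close> has a
  nearest point \<open>y i\<close> in \<open>A i\<close>; this needs only that all norms on \<open>\<real>\<^sup>n\<close> are equivalent to the
  \<open>\<ell>\<^sub>1\<close>-norm. Comparing with a fixed element of the product set shows that the distances
  \<open>|x i - y i|\<close> are bounded, hence the sequence \<open>y\<close> lies in \<open>X\<close>. Since \<open>y\<close> minimises every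
  coordinate distance simultaneously, it minimises the supremum as well, and both distances
  equal \<open>sup\<^sub>i |x i - y i|\<close>.
\<close>

lemma Rn_diff: "v \<in> Rn n \<Longrightarrow> w \<in> Rn n \<Longrightarrow> (\<lambda>j. v j - w j) \<in> Rn n"
  by (simp add: Rn_def)

lemma Rn_scale: "v \<in> Rn n \<Longrightarrow> (\<lambda>j. c * v j) \<in> Rn n"
  by (simp add: Rn_def)

lemma closed_Rn: "closed (Rn n)"
  unfolding Rn_def
  by (intro closed_Collect_all closed_Collect_imp closed_Collect_eq) auto

lemma compact_coordinatewise:
  assumes "\<And>j. compact (S j)"
  shows "compact {v :: nat \<Rightarrow> real. \<forall>j. v j \<in> S j}"
proof -
  have "{v :: nat \<Rightarrow> real. \<forall>j. v j \<in> S j} = PiE UNIV S"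
    by (auto simp: PiE_def Pi_def)
  moreover have "compactin (product_topology (\<lambda>i. euclidean) UNIV) (PiE UNIV S)"
    using assms by (simp add: compactin_PiE)
  ultimately show ?thesis
    by (simp add: euclidean_product_topology)
qed

lemma compact_bounded_closed_subset_Rn:
  assumes "closed S" "S \<subseteq> Rn n" "\<And>v j. v \<in> S \<Longrightarrow> j < n \<Longrightarrow> \<bar>v j\<bar> \<le> R"
  shows "compact S"
proof -
  define B where "B = {v :: nat \<Rightarrow> real. \<forall>j. v j \<in> (if j < n then {-R..R} else {0})}"
  have sub: "S \<subseteq> B"
    using assms(2,3) by (fastforce simp: B_def Rn_def abs_le_iff)
  have "compact B"
    unfolding B_def by (rule compact_coordinatewise) auto
  then have "compact (B \<inter> S)"
    using assms(1) by (rule compact_Int_closed)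
  then show ?thesis
    using sub by (simp add: Int_absorb1)
qed

lemma is_norm_on_nonneg: "is_norm_on n N \<Longrightarrow> v \<in> Rn n \<Longrightarrow> 0 \<le> N v"
  by (simp add: is_norm_on_def)

lemma is_norm_on_zero: "is_norm_on n N \<Longrightarrow> N (\<lambda>j. 0) = 0"
  by (simp add: is_norm_on_def Rn_def)

lemma is_norm_on_eq_0_iff: "is_norm_on n N \<Longrightarrow> v \<in> Rn n \<Longrightarrow> N v = 0 \<longleftrightarrow> (\<forall>j. v j = 0)"
  by (simp add: is_norm_on_def)

lemma is_norm_on_scale: "is_norm_on n N \<Longrightarrow> v \<in> Rn n \<Longrightarrow> N (\<lambda>j. c * v j) = \<bar>c\<bar> * N v"
  by (simp add: is_norm_on_def)

lemma is_norm_on_triangle: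
  "is_norm_on n N \<Longrightarrow> v \<in> Rn n \<Longrightarrow> w \<in> Rn n \<Longrightarrow> N (\<lambda>j. v j + w j) \<le> N v + N w"
  by (simp add: is_norm_on_def)

lemma is_norm_on_minus_commute:
  assumes "is_norm_on n N" "v \<in> Rn n" "w \<in> Rn n"
  shows "N (\<lambda>j. v j - w j) = N (\<lambda>j. w j - v j)"
proof -
  have "(\<lambda>j. w j - v j) = (\<lambda>j. (-1) * (v j - w j))"
    by auto
  then show ?thesis
    using is_norm_on_scale[OF assms(1) Rn_diff[OF assms(2,3)], of "-1"] by simp
qed

lemma is_norm_on_diff_le:
  assumes N: "is_norm_on n N" and v: "v \<in> Rn n" and w: "w \<in> Rn n"
  shows "N (\<lambda>j. v j - w j) \<le> N v + N w"
proof -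
  have "N (\<lambda>j. v j + (-1) * w j) \<le> N v + N (\<lambda>j. (-1) * w j)"
    by (rule is_norm_on_triangle[OF N v Rn_scale[OF w]])
  moreover have "N (\<lambda>j. (-1) * w j) = N w"
    using is_norm_on_scale[OF N w, of "-1"] by simp
  ultimately show ?thesis
    by simp
qed

lemma is_norm_on_le_add_diff:
  assumes N: "is_norm_on n N" and v: "v \<in> Rn n" and w: "w \<in> Rn n"
  shows "N v \<le> N w + N (\<lambda>j. v j - w j)"
  using is_norm_on_triangle[OF N w Rn_diff[OF v w]] by simp

definition unit_vec :: "nat \<Rightarrow> nat \<Rightarrow> real" where
  "unit_vec k = (\<lambda>i. if i = k then 1 else 0)"

lemma is_norm_on_le_sum_unit_vec:
  assumes N: "is_norm_on n N" and v: "v \<in> Rn n"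
  shows "N v \<le> (\<Sum>j<n. \<bar>v j\<bar> * N (unit_vec j))"
proof -
  have prefix: "N (\<lambda>i. if i < k then v i else 0) \<le> (\<Sum>j<k. \<bar>v j\<bar> * N (unit_vec j))"
    if "k \<le> n" for k
    using that
  proof (induction k)
    case 0
    then show ?case
      using is_norm_on_zero[OF N] by simp
  next
    case (Suc k)
    have e: "unit_vec k \<in> Rn n"
      using Suc.prems by (auto simp: Rn_def unit_vec_def)
    have t: "(\<lambda>i. if i < k then v i else 0) \<in> Rn n"
      using v by (auto simp: Rn_def)
    have split: "(\<lambda>i. if i < Suc k then v i else 0)
        = (\<lambda>i. (if i < k then v i else 0) + v k * unit_vec k i)"
      by (auto simp: unit_vec_def less_Suc_eq)
    have "N (\<lambda>i. (if i < k then v i else 0) + v k * unit_vec k i)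
        \<le> N (\<lambda>i. if i < k then v i else 0) + \<bar>v k\<bar> * N (unit_vec k)"
      using is_norm_on_triangle[OF N t Rn_scale[OF e, of "v k"]] is_norm_on_scale[OF N e, of "v k"]
      by simp
    then show ?case
      using Suc by (simp add: split)
  qed
  have "(\<lambda>i. if i < n then v i else 0) = v"
    using v by (auto simp: Rn_def)
  then show ?thesis
    using prefix[OF order_refl] by simp
qed

lemma is_norm_on_continuous_on:
  assumes N: "is_norm_on n N"
  shows "continuous_on (Rn n) N"
  unfolding continuous_on_def
proof
  fix w assume w: "w \<in> Rn n"
  define g where "g = (\<lambda>v :: nat \<Rightarrow> real. \<Sum>j<n. \<bar>v j - w j\<bar> * N (unit_vec j))"
  have "continuous_on UNIV g"
    unfolding g_def by (intro continuous_intros continuous_on_product_coordinates)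
  then have "(g \<longlongrightarrow> g w) (at w within Rn n)"
    by (meson UNIV_I continuous_on_def continuous_on_subset subset_UNIV w)
  then have g0: "(g \<longlongrightarrow> 0) (at w within Rn n)"
    by (simp add: g_def)
  have "norm (N v - N w) \<le> g v" if v: "v \<in> Rn n" for v
    using is_norm_on_le_add_diff[OF N v w] is_norm_on_le_add_diff[OF N w v]
      is_norm_on_minus_commute[OF N v w] is_norm_on_le_sum_unit_vec[OF N Rn_diff[OF v w]]
    by (simp add: g_def)
  then have "\<forall>\<^sub>F v in at w within Rn n. norm (N v - N w) \<le> g v"
    by (simp add: eventually_at_filter)
  then have "((\<lambda>v. N v - N w) \<longlongrightarrow> 0) (at w within Rn n)"
    by (rule Lim_null_comparison[OF _ g0])
  then show "(N \<longlongrightarrow> N w) (at w within Rn n)"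
    by (simp add: LIM_zero_iff)
qed

lemma is_norm_on_ge_sum_abs:
  assumes N: "is_norm_on n N" and "n > 0"
  obtains c where "c > 0" "\<And>v. v \<in> Rn n \<Longrightarrow> c * (\<Sum>j<n. \<bar>v j\<bar>) \<le> N v"
proof -
  define Sph where "Sph = Rn n \<inter> {v. (\<Sum>j<n. \<bar>v j\<bar>) = 1}"
  have "(\<Sum>j<n. \<bar>unit_vec 0 j\<bar>) = 1"
  proof -
    have "(\<lambda>j. \<bar>unit_vec 0 j\<bar>) = unit_vec 0"
      by (auto simp: unit_vec_def)
    then show ?thesis
      using \<open>n > 0\<close> by (simp add: unit_vec_def)
  qed
  then have "unit_vec 0 \<in> Sph"
    using \<open>n > 0\<close> by (simp add: Sph_def Rn_def unit_vec_def)
  then have ne: "Sph \<noteq> {}"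
    by blast
  have "closed Sph"
    unfolding Sph_def
    by (intro closed_Int closed_Rn closed_Collect_eq continuous_intros continuous_on_product_coordinates)
  moreover have "\<bar>v j\<bar> \<le> 1" if "v \<in> Sph" "j < n" for v j
  proof -
    have "\<bar>v j\<bar> \<le> (\<Sum>j<n. \<bar>v j\<bar>)"
      by (rule member_le_sum) (use that in auto)
    then show ?thesis
      using that by (simp add: Sph_def)
  qed
  ultimately have "compact Sph"
    by (intro compact_bounded_closed_subset_Rn) (auto simp: Sph_def)
  moreover note ne
  moreover have "continuous_on Sph N"
    using is_norm_on_continuous_on[OF N] by (rule continuous_on_subset) (simp add: Sph_def)
  ultimately have "\<exists>v0 \<in> Sph. \<forall>v \<in> Sph. N v0 \<le> N v"
    by (rule continuous_attains_inf)
  then obtain v0 where v0: "v0 \<in> Sph" "\<And>v. v \<in> Sph \<Longrightarrow> N v0 \<le> N v"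
    by blast
  have v0_Rn: "v0 \<in> Rn n"
    using v0(1) by (simp add: Sph_def)
  have "\<exists>j. v0 j \<noteq> 0"
  proof (rule ccontr)
    assume "\<not> (\<exists>j. v0 j \<noteq> 0)"
    then show False
      using v0(1) by (simp add: Sph_def)
  qed
  then have "N v0 \<noteq> 0"
    using is_norm_on_eq_0_iff[OF N v0_Rn] by simp
  then have c0: "N v0 > 0"
    using is_norm_on_nonneg[OF N v0_Rn] by linarith
  have "N v0 * (\<Sum>j<n. \<bar>v j\<bar>) \<le> N v" if v: "v \<in> Rn n" for v
  proof (cases "(\<Sum>j<n. \<bar>v j\<bar>) = 0")
    case True
    then show ?thesis
      using is_norm_on_nonneg[OF N v] by simp
  next
    case False
    define s where "s = (\<Sum>j<n. \<bar>v j\<bar>)"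
    have s0: "s > 0"
      using False unfolding s_def by (metis abs_ge_zero order_less_le sum_nonneg)
    have "(\<Sum>j<n. \<bar>(1/s) * v j\<bar>) = (1/s) * s"
      unfolding s_def by (simp add: abs_mult sum_distrib_left)
    then have "(\<Sum>j<n. \<bar>(1/s) * v j\<bar>) = 1"
      using s0 by simp
    then have "(\<lambda>j. (1/s) * v j) \<in> Sph"
      using Rn_scale[OF v, of "1/s"] by (simp add: Sph_def)
    then have "N v0 \<le> N (\<lambda>j. (1/s) * v j)"
      by (rule v0(2))
    also have "\<dots> = N v / s"
      using is_norm_on_scale[OF N v, of "1/s"] s0 by simp
    finally show ?thesis
      using s0 by (simp add: s_def[symmetric] field_simps)
  qed
  then show ?thesis
    using c0 that by blast
qed

lemma is_norm_on_nearest_point_exists: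
  assumes N: "is_norm_on n N" and "n > 0" and z: "z \<in> Rn n"
    and A: "A \<subseteq> Rn n" "A \<noteq> {}" "closed A"
  obtains a where "a \<in> A" "\<And>b. b \<in> A \<Longrightarrow> N (\<lambda>j. z j - a j) \<le> N (\<lambda>j. z j - b j)"
proof -
  obtain c where c: "c > 0" "\<And>v. v \<in> Rn n \<Longrightarrow> c * (\<Sum>j<n. \<bar>v j\<bar>) \<le> N v"
    using is_norm_on_ge_sum_abs[OF N \<open>n > 0\<close>] by blast
  obtain a0 where a0: "a0 \<in> A"
    using A by blast
  define r where "r = N (\<lambda>j. z j - a0 j)"
  define R where "R = (\<Sum>j<n. \<bar>z j\<bar>) + r / c"
  define K where "K = {b \<in> A. N (\<lambda>j. z j - b j) \<le> r}"
  have bounded: "\<bar>b j\<bar> \<le> R" if "b \<in> K" "j < n" for b j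
  proof -
    have b: "b \<in> Rn n" "N (\<lambda>j. z j - b j) \<le> r"
      using that A by (auto simp: K_def)
    have "c * (\<Sum>j<n. \<bar>z j - b j\<bar>) \<le> r"
      using c(2)[OF Rn_diff[OF z b(1)]] b(2) by simp
    then have s: "(\<Sum>j<n. \<bar>z j - b j\<bar>) \<le> r / c"
      using c(1) by (simp add: field_simps mult.commute)
    have "\<bar>b j\<bar> \<le> \<bar>z j\<bar> + \<bar>z j - b j\<bar>"
      by simp
    also have "\<dots> \<le> (\<Sum>j<n. \<bar>z j\<bar>) + (\<Sum>j<n. \<bar>z j - b j\<bar>)"
      by (intro add_mono member_le_sum) (use that in auto)
    finally show ?thesis
      using s by (simp add: R_def)
  qed
  have cont: "continuous_on A (\<lambda>b. N (\<lambda>j. z j - b j))"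
    by (rule continuous_on_compose2[OF is_norm_on_continuous_on[OF N]])
      (use A z in \<open>auto intro!: continuous_intros Rn_diff
        continuous_on_subset[OF continuous_on_product_coordinates]\<close>)
  have "closed K"
  proof -
    have "K = A \<inter> (\<lambda>b. N (\<lambda>j. z j - b j)) -` {..r}"
      by (auto simp: K_def)
    then show ?thesis
      using continuous_closed_preimage[OF cont A(3)] by simp
  qed
  then have "compact K"
    using A(1) bounded by (intro compact_bounded_closed_subset_Rn) (auto simp: K_def)
  moreover have "K \<noteq> {}"
    using a0 by (auto simp: K_def r_def)
  moreover have "continuous_on K (\<lambda>b. N (\<lambda>j. z j - b j))"
    using cont by (rule continuous_on_subset) (auto simp: K_def)
  ultimately have "\<exists>a \<in> K. \<forall>b \<in> K. N (\<lambda>j. z j - a j) \<le> N (\<lambda>j. z j - b j)"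
    by (rule continuous_attains_inf)
  then obtain a where a: "a \<in> K" and min: "\<And>b. b \<in> K \<Longrightarrow> N (\<lambda>j. z j - a j) \<le> N (\<lambda>j. z j - b j)"
    by blast
  have "N (\<lambda>j. z j - a j) \<le> N (\<lambda>j. z j - b j)" if "b \<in> A" for b
  proof (cases "b \<in> K")
    case True
    then show ?thesis
      by (rule min)
  next
    case False
    then show ?thesis
      using a that by (simp add: K_def)
  qed
  moreover have "a \<in> A"
    using a by (simp add: K_def)
  ultimately show ?thesis
    using that by blast
qed

lemma dist_set_eq_nearest_point:
  assumes "a \<in> S" "\<And>b. b \<in> S \<Longrightarrow> Ni (\<lambda>j. z j - a j) \<le> Ni (\<lambda>j. z j - b j)"
  shows "dist_set Ni S z = Ni (\<lambda>j. z j - a j)"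
  unfolding dist_set_def by (rule cInf_eq_minimum) (use assms in auto)

lemma Xsp_diff_bdd_above:
  assumes N: "\<And>i. is_norm_on (n i) (N i)" and x: "x \<in> Xsp n N" and y: "y \<in> Xsp n N"
  shows "bdd_above (range (\<lambda>i. N i (\<lambda>j. x i j - y i j)))"
proof -
  obtain Bx By where "\<And>i. N i (x i) \<le> Bx" "\<And>i. N i (y i) \<le> By"
    using x y by (auto simp: Xsp_def bdd_above_def)
  moreover have "N i (\<lambda>j. x i j - y i j) \<le> N i (x i) + N i (y i)" for i
    using x y by (intro is_norm_on_diff_le[OF N]) (auto simp: Xsp_def)
  ultimately have "N i (\<lambda>j. x i j - y i j) \<le> Bx + By" for i
    by (meson add_mono order_trans)
  then show ?thesis
    by (auto simp: bdd_above_def)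
qed

lemma Xsp_if_closer_than_Xsp:
  assumes N: "\<And>i. is_norm_on (n i) (N i)" and x: "x \<in> Xsp n N" and a: "a \<in> Xsp n N"
    and y: "\<And>i. y i \<in> Rn (n i)"
    and closer: "\<And>i. N i (\<lambda>j. x i j - y i j) \<le> N i (\<lambda>j. x i j - a i j)"
  shows "y \<in> Xsp n N"
proof -
  have x_Rn: "x i \<in> Rn (n i)" for i
    using x by (simp add: Xsp_def)
  obtain Bx Ba where "\<And>i. N i (x i) \<le> Bx" "\<And>i. N i (\<lambda>j. x i j - a i j) \<le> Ba"
    using x Xsp_diff_bdd_above[OF N x a] by (auto simp: Xsp_def bdd_above_def)
  moreover have "N i (y i) \<le> N i (x i) + N i (\<lambda>j. x i j - y i j)" for i
    using is_norm_on_le_add_diff[OF N y x_Rn] is_norm_on_minus_commute[OF N y x_Rn] by simp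
  ultimately have "N i (y i) \<le> Bx + Ba" for i
    using closer[of i] by (meson add_mono order_trans)
  then show ?thesis
    using y by (auto simp: Xsp_def bdd_above_def)
qed

lemma dist_setX_eq_coordinatewise_nearest:
  assumes N: "\<And>i. is_norm_on (n i) (N i)" and x: "x \<in> Xsp n N"
    and S: "S \<subseteq> Xsp n N" and y: "y \<in> S"
    and nearest: "\<And>w i. w \<in> S \<Longrightarrow> N i (\<lambda>j. x i j - y i j) \<le> N i (\<lambda>j. x i j - w i j)"
  shows "dist_setX N S x = norm_inf N (\<lambda>i j. x i j - y i j)"
  unfolding dist_setX_def
proof (rule cInf_eq_minimum)
  show "norm_inf N (\<lambda>i j. x i j - y i j) \<in> (\<lambda>y. norm_inf N (\<lambda>i j. x i j - y i j)) ` S"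
    using y by blast
next
  fix t assume "t \<in> (\<lambda>y. norm_inf N (\<lambda>i j. x i j - y i j)) ` S"
  then obtain w where w: "w \<in> S" and t: "t = norm_inf N (\<lambda>i j. x i j - w i j)"
    by blast
  have bdd: "bdd_above (range (\<lambda>i. N i (\<lambda>j. x i j - w i j)))"
    by (rule Xsp_diff_bdd_above[OF N x]) (use w S in auto)
  show "norm_inf N (\<lambda>i j. x i j - y i j) \<le> t"
    unfolding t norm_inf_def by (rule cSUP_mono[OF _ bdd]) (use nearest w in auto)
qed

theorem lemma2:
  fixes n :: "nat \<Rightarrow> nat"
    and N :: "nat \<Rightarrow> (nat \<Rightarrow> real) \<Rightarrow> real"
    and A :: "nat \<Rightarrow> (nat \<Rightarrow> real) set"
    and x :: "nat \<Rightarrow> nat \<Rightarrow> real"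
  assumes npos: "\<And>i. n i > 0"
    and norms: "\<And>i. is_norm_on (n i) (N i)"
    and Asub: "\<And>i. A i \<subseteq> Rn (n i)"
    and Ane: "\<And>i. A i \<noteq> {}"
    and Aclosed: "\<And>i. closed (A i)"
    and Ine: "{y \<in> Xsp n N. \<forall>i. y i \<in> A i} \<noteq> {}"
    and x: "x \<in> Xsp n N"
  shows "\<exists>ystar \<in> {y \<in> Xsp n N. \<forall>i. y i \<in> A i}.
           dist_setX N {y \<in> Xsp n N. \<forall>i. y i \<in> A i} x = (SUP i. dist_set (N i) (A i) (x i))
         \<and> (SUP i. dist_set (N i) (A i) (x i)) = norm_inf N (\<lambda>i j. x i j - ystar i j)"
proof -
  define I where "I = {y \<in> Xsp n N. \<forall>i. y i \<in> A i}"
  have x_Rn: "x i \<in> Rn (n i)" for i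
    using x by (simp add: Xsp_def)
  have "\<exists>a \<in> A i. \<forall>b \<in> A i. N i (\<lambda>j. x i j - a j) \<le> N i (\<lambda>j. x i j - b j)" for i
    by (rule is_norm_on_nearest_point_exists[OF norms npos x_Rn Asub Ane Aclosed]) blast
  then obtain y where yA: "\<And>i. y i \<in> A i"
    and nearest: "\<And>i b. b \<in> A i \<Longrightarrow> N i (\<lambda>j. x i j - y i j) \<le> N i (\<lambda>j. x i j - b j)"
    by metis
  obtain a where a: "a \<in> I"
    using Ine by (auto simp: I_def)
  then have aA: "a i \<in> A i" for i
    by (simp add: I_def)
  have y: "y \<in> I"
    using Xsp_if_closer_than_Xsp[OF norms x _ _ nearest[OF aA]] a yA Asub by (auto simp: I_def)
  have "dist_set (N i) (A i) (x i) = N i (\<lambda>j. x i j - y i j)" for i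
    using yA nearest by (rule dist_set_eq_nearest_point)
  then have "(SUP i. dist_set (N i) (A i) (x i)) = norm_inf N (\<lambda>i j. x i j - y i j)"
    by (simp add: norm_inf_def)
  moreover have "dist_setX N I x = norm_inf N (\<lambda>i j. x i j - y i j)"
    by (rule dist_setX_eq_coordinatewise_nearest[OF norms x _ y]) (auto simp: I_def nearest)
  ultimately show ?thesis
    using y unfolding I_def by auto
qed

end
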